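(* For $n\ge 1$, there is a one-to-one correspondence between the set of signed permutations $\pi=\pi_1\pi_2\cdots\pi_n$ of $\{0,1,\dots,n-1\}$ with $\pi_n\neq 0$ (that is, $\pi_n$ is not the unbarred $0$) that are representations of signed skew derangements on $[n]$, and the set of derangements of type $B$ on $[n]$.
   Context: A signed permutation on a set $S$ of integers is an arrangement of the elements of $S$ in which some entries carry a bar. A derangement of type $B$ on $[n]$ is a signed permutation $\tau_1\cdots\tau_n$ of $[n]$ with $\tau_i\neq i$ for all $i$ (where $\tau_i=\bar i$ is allowed). A signed set on $[n]$ is $[n]$ with some elements barred; for such $X$, $X-1$ is obtained by subtracting $1$ from each element using $\bar i-1=\overline{i-1}$. A signed skew derangement on $[n]$ is a bijection $f:X\to X-1$, for some signed set $X$ on $[n]$, with $f(x)\ne x$ for all $x\in X$. The representation of a bijection $f:X\to X-1$ is the signed permutation $\pi_1\cdots\pi_n$ of $\{0,\dots,n-1\}$ given by $\pi_i=f(\sigma_i)$, where $\sigma_i$ is the element of $X$ with underlying value $i$; this gives a bijection between all such maps $f$ (over all signed sets $X$) and all signed permutations of $\{0,\dots,n-1\}$. *)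

theory Defs
  imports Main
begin

text \<open>A signed integer is a pair (value, barred); barred = True means the entry carries a bar.\<close>
type_synonym sint = "nat \<times> bool"

definition signed_perm :: "nat set \<Rightarrow> sint list \<Rightarrow> bool" where
  "signed_perm S xs \<longleftrightarrow> distinct (map fst xs) \<and> set (map fst xs) = S"

definition typeB_derangement :: "nat \<Rightarrow> sint list \<Rightarrow> bool" where
  "typeB_derangement n \<tau> \<longleftrightarrow> signed_perm {1..n} \<tau> \<and> (\<forall>i<n. \<tau> ! i \<noteq> (i + 1, False))"

definition signed_set :: "nat \<Rightarrow> sint set \<Rightarrow> bool" where
  "signed_set n X \<longleftrightarrow> fst ` X = {1..n} \<and> inj_on fst X"

definition shift_down :: "sint set \<Rightarrow> sint set" where
  "shift_down X = (\<lambda>(i, c). (i - 1, c)) ` X"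

definition signed_skew_derangement :: "nat \<Rightarrow> sint set \<Rightarrow> (sint \<Rightarrow> sint) \<Rightarrow> bool" where
  "signed_skew_derangement n X f \<longleftrightarrow>
     signed_set n X \<and> bij_betw f X (shift_down X) \<and> (\<forall>x\<in>X. f x \<noteq> x)"

definition representation :: "nat \<Rightarrow> sint set \<Rightarrow> (sint \<Rightarrow> sint) \<Rightarrow> sint list" where
  "representation n X f = map (\<lambda>i. f (THE x. x \<in> X \<and> fst x = i)) [1..<n+1]"

definition represents_skew_derangement :: "nat \<Rightarrow> sint list \<Rightarrow> bool" where
  "represents_skew_derangement n \<pi> \<longleftrightarrow>
     (\<exists>X f. signed_skew_derangement n X f \<and> \<pi> = representation n X f)"

end

theory Submission
  imports Defs
begin

text \<open>A signed permutation \<pi> of {0,...,n-1} determines the skew derangement it could represent: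
  X - 1 must be the set of entries of \<pi>, so \<sigma>_(k+1) = (k+1, bar of k in \<pi>), and \<pi> represents a
  signed skew derangement iff \<pi>_k \<noteq> \<sigma>_(k+1) for all k. Now relabel the value 0 as n and replace
  the bar of each value v by the XOR of the bars of v and v - 1 in \<pi> (the value 0 keeping its own
  bar); prefix XORs invert this. The forbidden pattern \<pi>_k = \<sigma>_(k+1) becomes the entry k+1
  unbarred in position k, and \<pi>_n = 0 unbarred becomes the entry n unbarred in position n,
  so the conditions match exactly the type B derangements.\<close>

definition bar_of :: "sint list \<Rightarrow> nat \<Rightarrow> bool" where
  "bar_of xs v = the (map_of xs v)"

lemma bar_of_eq: "distinct (map fst xs) \<Longrightarrow> (v, b) \<in> set xs \<Longrightarrow> bar_of xs v = b"
  by (simp add: bar_of_def map_of_is_SomeI)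

lemma signed_perm_bar_of: "signed_perm S xs \<Longrightarrow> (v, b) \<in> set xs \<Longrightarrow> bar_of xs v = b"
  unfolding signed_perm_def by (rule bar_of_eq) auto

lemma signed_perm_fst_mem: "signed_perm S xs \<Longrightarrow> (v, b) \<in> set xs \<Longrightarrow> v \<in> S"
  unfolding signed_perm_def by force

lemma signed_perm_mem_bar_of: "signed_perm S xs \<Longrightarrow> v \<in> S \<Longrightarrow> (v, bar_of xs v) \<in> set xs"
  using signed_perm_bar_of unfolding signed_perm_def by fastforce

lemma signed_perm_length: "signed_perm S xs \<Longrightarrow> finite S \<Longrightarrow> length xs = card S"
  unfolding signed_perm_def by (metis distinct_card length_map)

definition relabel :: "(nat \<Rightarrow> nat) \<Rightarrow> (nat \<Rightarrow> bool) \<Rightarrow> sint list \<Rightarrow> sint list" where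
  "relabel h c xs = map (\<lambda>(v, b). (h v, c v)) xs"

lemma nth_relabel: "k < length xs \<Longrightarrow> relabel h c xs ! k = (h (fst (xs ! k)), c (fst (xs ! k)))"
  by (simp add: relabel_def case_prod_beta)

lemma signed_perm_relabel:
  assumes "signed_perm S xs" "inj_on h S"
  shows "signed_perm (h ` S) (relabel h c xs)"
proof -
  have "map fst (relabel h c xs) = map h (map fst xs)"
    by (auto simp: relabel_def)
  moreover have "distinct (map h (map fst xs))" "set (map h (map fst xs)) = h ` S"
    using assms unfolding signed_perm_def by (simp_all only: distinct_map set_map)
  ultimately show ?thesis
    unfolding signed_perm_def by simp
qed

lemma bar_of_relabel:
  assumes "signed_perm S xs" "inj_on h S" "v \<in> S"
  shows "bar_of (relabel h c xs) (h v) = c v"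
proof -
  have "(h v, c v) \<in> set (relabel h c xs)"
    using signed_perm_mem_bar_of[OF assms(1,3)] unfolding relabel_def by force
  then show ?thesis
    by (rule signed_perm_bar_of[OF signed_perm_relabel[OF assms(1,2)]])
qed

lemma relabel_inverse:
  assumes "ys = relabel h c xs"
    and "\<And>v b. (v, b) \<in> set xs \<Longrightarrow> h' (h v) = v \<and> c' (h v) = b"
  shows "relabel h' c' ys = xs"
  unfolding assms(1) relabel_def map_map by (rule map_idI) (auto dest: assms(2))

definition xor_diff :: "(nat \<Rightarrow> bool) \<Rightarrow> nat \<Rightarrow> bool" where
  "xor_diff d v = (if v = 0 then d 0 else d v \<noteq> d (v - 1))"

fun xor_prefix :: "(nat \<Rightarrow> bool) \<Rightarrow> nat \<Rightarrow> bool" where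
  "xor_prefix d 0 = d 0"
| "xor_prefix d (Suc j) = (xor_prefix d j \<noteq> d (Suc j))"

lemma xor_prefix_xor_diff: "xor_prefix (xor_diff d) j = d j"
  by (induction j) (auto simp: xor_diff_def)

lemma xor_diff_xor_prefix: "xor_diff (xor_prefix d) v = d v"
  by (cases v) (auto simp: xor_diff_def)

lemma xor_prefix_cong: "(\<And>i. i \<le> j \<Longrightarrow> d i = d' i) \<Longrightarrow> xor_prefix d j = xor_prefix d' j"
  by (induction j) auto

lemma xor_diff_cong: "(\<And>i. i \<le> v \<Longrightarrow> d i = d' i) \<Longrightarrow> xor_diff d v = xor_diff d' v"
  by (simp add: xor_diff_def)

definition zero_to_top :: "nat \<Rightarrow> nat \<Rightarrow> nat" where
  "zero_to_top n v = (if v = 0 then n else v)"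

definition top_to_zero :: "nat \<Rightarrow> nat \<Rightarrow> nat" where
  "top_to_zero n w = (if w = n then 0 else w)"

lemma top_to_zero_zero_to_top: "v < n \<Longrightarrow> top_to_zero n (zero_to_top n v) = v"
  by (simp add: zero_to_top_def top_to_zero_def)

lemma zero_to_top_top_to_zero: "w \<in> {1..n} \<Longrightarrow> zero_to_top n (top_to_zero n w) = w"
  by (auto simp: zero_to_top_def top_to_zero_def)

lemma inj_on_zero_to_top: "inj_on (zero_to_top n) {0..<n}"
  by (metis inj_on_inverseI atLeastLessThan_iff top_to_zero_zero_to_top)

lemma inj_on_top_to_zero: "inj_on (top_to_zero n) {1..n}"
  by (metis inj_on_inverseI zero_to_top_top_to_zero)

lemma zero_to_top_image: "1 \<le> n \<Longrightarrow> zero_to_top n ` {0..<n} = {1..n}"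
  by (force simp: zero_to_top_def intro: image_eqI[of _ _ 0] image_eqI[of _ _ "top_to_zero n _"]
      dest: zero_to_top_top_to_zero)

lemma top_to_zero_image: "1 \<le> n \<Longrightarrow> top_to_zero n ` {1..n} = {0..<n}"
  by (force simp: top_to_zero_def intro: image_eqI[of _ _ n] image_eqI[of _ _ "zero_to_top n _"]
      dest: top_to_zero_zero_to_top)

definition to_typeB :: "nat \<Rightarrow> sint list \<Rightarrow> sint list" where
  "to_typeB n \<pi> = relabel (zero_to_top n) (xor_diff (bar_of \<pi>)) \<pi>"

definition from_typeB :: "nat \<Rightarrow> sint list \<Rightarrow> sint list" where
  "from_typeB n \<tau> =
     relabel (top_to_zero n) (\<lambda>w. xor_prefix (\<lambda>v. bar_of \<tau> (zero_to_top n v)) (top_to_zero n w)) \<tau>"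

lemma bar_of_to_typeB:
  "signed_perm {0..<n} \<pi> \<Longrightarrow> v < n \<Longrightarrow> bar_of (to_typeB n \<pi>) (zero_to_top n v) = xor_diff (bar_of \<pi>) v"
  unfolding to_typeB_def by (simp add: bar_of_relabel inj_on_zero_to_top)

lemma bar_of_from_typeB:
  assumes "signed_perm {1..n} \<tau>" "v < n"
  shows "bar_of (from_typeB n \<tau>) v = xor_prefix (\<lambda>u. bar_of \<tau> (zero_to_top n u)) v"
proof -
  have "zero_to_top n v \<in> {1..n}"
    using assms(2) by (auto simp: zero_to_top_def)
  then show ?thesis
    using bar_of_relabel[OF assms(1) inj_on_top_to_zero] assms(2)
    unfolding from_typeB_def by (metis top_to_zero_zero_to_top)
qed

lemma from_to_typeB:
  assumes "signed_perm {0..<n} \<pi>"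
  shows "from_typeB n (to_typeB n \<pi>) = \<pi>"
  unfolding from_typeB_def
proof (rule relabel_inverse[OF to_typeB_def])
  fix v b assume vb: "(v, b) \<in> set \<pi>"
  then have v: "v < n"
    using signed_perm_fst_mem[OF assms] by auto
  have "xor_prefix (\<lambda>u. bar_of (to_typeB n \<pi>) (zero_to_top n u)) v
      = xor_prefix (xor_diff (bar_of \<pi>)) v"
    using v by (intro xor_prefix_cong) (simp add: bar_of_to_typeB[OF assms])
  also have "\<dots> = b"
    using vb by (simp add: xor_prefix_xor_diff signed_perm_bar_of[OF assms])
  finally show "top_to_zero n (zero_to_top n v) = v \<and>
      xor_prefix (\<lambda>u. bar_of (to_typeB n \<pi>) (zero_to_top n u)) (top_to_zero n (zero_to_top n v)) = b"
    using v by (simp add: top_to_zero_zero_to_top)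
qed

lemma to_from_typeB:
  assumes "signed_perm {1..n} \<tau>"
  shows "to_typeB n (from_typeB n \<tau>) = \<tau>"
  unfolding to_typeB_def
proof (rule relabel_inverse[OF from_typeB_def])
  fix w e assume we: "(w, e) \<in> set \<tau>"
  then have w: "w \<in> {1..n}"
    using signed_perm_fst_mem[OF assms] by auto
  have "xor_diff (bar_of (from_typeB n \<tau>)) (top_to_zero n w)
      = xor_diff (xor_prefix (\<lambda>u. bar_of \<tau> (zero_to_top n u))) (top_to_zero n w)"
    using w by (intro xor_diff_cong bar_of_from_typeB[OF assms]) (auto simp: top_to_zero_def split: if_splits)
  also have "\<dots> = e"
    using we w by (simp add: xor_diff_xor_prefix zero_to_top_top_to_zero signed_perm_bar_of[OF assms])
  finally show "zero_to_top n (top_to_zero n w) = w \<and>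
      xor_diff (bar_of (from_typeB n \<tau>)) (top_to_zero n w) = e"
    using w by (simp add: zero_to_top_top_to_zero)
qed

lemma bij_betw_to_typeB:
  assumes "1 \<le> n"
  shows "bij_betw (to_typeB n) {\<pi>. signed_perm {0..<n} \<pi>} {\<tau>. signed_perm {1..n} \<tau>}"
proof (rule bij_betw_byWitness[where f' = "from_typeB n"])
  show "from_typeB n ` {\<tau>. signed_perm {1..n} \<tau>} \<subseteq> {\<pi>. signed_perm {0..<n} \<pi>}"
    unfolding from_typeB_def using signed_perm_relabel[OF _ inj_on_top_to_zero] top_to_zero_image[OF assms]
    by force
  show "to_typeB n ` {\<pi>. signed_perm {0..<n} \<pi>} \<subseteq> {\<tau>. signed_perm {1..n} \<tau>}"
    unfolding to_typeB_def using signed_perm_relabel[OF _ inj_on_zero_to_top] zero_to_top_image[OF assms]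
    by force
qed (simp_all add: from_to_typeB to_from_typeB)

lemma to_typeB_nth_eq_fixed_iff:
  assumes "signed_perm {0..<n} \<pi>" "k < n"
  shows "to_typeB n \<pi> ! k = (Suc k, False) \<longleftrightarrow>
           \<pi> ! k = (Suc k, bar_of \<pi> k) \<or> (Suc k = n \<and> \<pi> ! k = (0, False))"
proof -
  obtain v b where vb: "\<pi> ! k = (v, b)"
    by force
  have len: "length \<pi> = n"
    using signed_perm_length[OF assms(1)] by simp
  have "(v, b) \<in> set \<pi>"
    using vb assms(2) len by (metis nth_mem)
  then have "v < n" "bar_of \<pi> v = b"
    using signed_perm_fst_mem[OF assms(1)] signed_perm_bar_of[OF assms(1)] by auto
  moreover have "to_typeB n \<pi> ! k = (zero_to_top n v, xor_diff (bar_of \<pi>) v)"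
    using assms(2) len vb by (simp add: to_typeB_def nth_relabel)
  ultimately show ?thesis
    using vb by (auto simp: zero_to_top_def xor_diff_def)
qed

lemma signed_set_the_value:
  assumes "signed_set n X" "x \<in> X"
  shows "(THE y. y \<in> X \<and> fst y = fst x) = x"
  using assms by (intro the_equality) (auto simp: signed_set_def dest: inj_onD)

lemma signed_set_obtain_value:
  assumes "signed_set n X" "i \<in> {1..n}"
  obtains x where "x \<in> X" "fst x = i"
  using assms unfolding signed_set_def by (metis imageE)

lemma signed_set_image_the_value:
  assumes "signed_set n X"
  shows "(\<lambda>i. THE x. x \<in> X \<and> fst x = i) ` {1..n} = X"
proof
  show "(\<lambda>i. THE x. x \<in> X \<and> fst x = i) ` {1..n} \<subseteq> X"
  proof
    fix y assume "y \<in> (\<lambda>i. THE x. x \<in> X \<and> fst x = i) ` {1..n}"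
    then obtain i where i: "i \<in> {1..n}" "y = (THE x. x \<in> X \<and> fst x = i)"
      by blast
    obtain x where x: "x \<in> X" "fst x = i"
      using signed_set_obtain_value[OF assms i(1)] .
    then show "y \<in> X"
      using signed_set_the_value[OF assms x(1)] i(2) by simp
  qed
  show "X \<subseteq> (\<lambda>i. THE x. x \<in> X \<and> fst x = i) ` {1..n}"
  proof
    fix x assume x: "x \<in> X"
    then have "fst x \<in> {1..n}"
      using assms unfolding signed_set_def by blast
    then show "x \<in> (\<lambda>i. THE x. x \<in> X \<and> fst x = i) ` {1..n}"
      using signed_set_the_value[OF assms x] by (intro image_eqI[of _ _ "fst x"]) auto
  qed
qed

lemma nth_representation:
  "k < n \<Longrightarrow> representation n X f ! k = f (THE x. x \<in> X \<and> fst x = Suc k)"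
  unfolding representation_def by (simp del: upt_Suc)

lemma set_representation:
  assumes "signed_set n X"
  shows "set (representation n X f) = f ` X"
proof -
  have "set (representation n X f) = f ` (\<lambda>i. THE x. x \<in> X \<and> fst x = i) ` {1..n}"
    unfolding representation_def set_map set_upt Suc_eq_plus1[symmetric] atLeastLessThanSuc_atLeastAtMost
    by (simp only: image_image)
  then show ?thesis
    using signed_set_image_the_value[OF assms] by simp
qed

lemma Suc_mem_of_shift_down:
  assumes "signed_set n X" "(k, c) \<in> shift_down X"
  shows "(Suc k, c) \<in> X"
proof -
  obtain i where i: "(i, c) \<in> X" "k = i - 1"
    using assms(2) by (auto simp: shift_down_def)
  moreover have "i \<noteq> 0"
    using assms(1) i(1) by (force simp: signed_set_def)
  ultimately show ?thesis
    by (simp add: Suc_pred)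
qed

lemma represents_skew_derangement_nth_neq:
  assumes "represents_skew_derangement n \<pi>" "signed_perm {0..<n} \<pi>" "k < n"
  shows "\<pi> ! k \<noteq> (Suc k, bar_of \<pi> k)"
proof
  assume fixed: "\<pi> ! k = (Suc k, bar_of \<pi> k)"
  obtain X f where X: "signed_set n X" and f: "bij_betw f X (shift_down X)" "\<forall>x\<in>X. f x \<noteq> x"
    and \<pi>: "\<pi> = representation n X f"
    using assms(1) by (auto simp: represents_skew_derangement_def signed_skew_derangement_def)
  have "(k, bar_of \<pi> k) \<in> set \<pi>"
    using signed_perm_mem_bar_of[OF assms(2)] assms(3) by simp
  also have "set \<pi> = shift_down X"
    using \<pi> set_representation[OF X] f(1) by (simp add: bij_betw_def)
  finally have x: "(Suc k, bar_of \<pi> k) \<in> X"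
    by (rule Suc_mem_of_shift_down[OF X])
  have "f (Suc k, bar_of \<pi> k) = \<pi> ! k"
    using nth_representation[OF assms(3)] signed_set_the_value[OF X x] \<pi> by simp
  then show False
    using fixed f(2) x by simp
qed

lemma represents_skew_derangementI:
  assumes \<pi>: "signed_perm {0..<n} \<pi>" and no_fixed: "\<forall>k<n. \<pi> ! k \<noteq> (Suc k, bar_of \<pi> k)"
  shows "represents_skew_derangement n \<pi>"
proof -
  \<comment> \<open>the only candidate, since X - 1 has to be the set of entries of \<pi>\<close>
  define X where "X = (\<lambda>(v, b). (Suc v, b)) ` set \<pi>"
  define f where "f x = \<pi> ! (fst x - 1)" for x :: sint
  have len: "length \<pi> = n"
    using signed_perm_length[OF \<pi>] by simp
  have X_eq: "X = (\<lambda>k. (Suc k, bar_of \<pi> k)) ` {0..<n}"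
  proof
    show "X \<subseteq> (\<lambda>k. (Suc k, bar_of \<pi> k)) ` {0..<n}"
      unfolding X_def using signed_perm_fst_mem[OF \<pi>] signed_perm_bar_of[OF \<pi>] by force
    show "(\<lambda>k. (Suc k, bar_of \<pi> k)) ` {0..<n} \<subseteq> X"
      unfolding X_def using signed_perm_mem_bar_of[OF \<pi>] by force
  qed
  have X: "signed_set n X"
    unfolding signed_set_def X_eq
    by (auto simp: image_image atLeastLessThanSuc_atLeastAtMost inj_on_def)
  have f_X: "f (Suc k, bar_of \<pi> k) = \<pi> ! k" for k
    by (simp add: f_def)
  have rep: "representation n X f = \<pi>"
  proof (rule nth_equalityI)
    fix k assume "k < length (representation n X f)"
    then have k: "k < n"
      by (simp add: representation_def del: upt_Suc)
    then have "(Suc k, bar_of \<pi> k) \<in> X"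
      unfolding X_eq by simp
    from signed_set_the_value[OF X this] show "representation n X f ! k = \<pi> ! k"
      using nth_representation[OF k] f_X by simp
  qed (simp add: representation_def len del: upt_Suc)
  have "shift_down X = set \<pi>"
    unfolding shift_down_def X_def by (force simp: image_image case_prod_beta)
  moreover have "inj_on f X"
  proof -
    have "distinct \<pi>"
      using \<pi> by (simp add: signed_perm_def distinct_map)
    then show ?thesis
      unfolding X_eq inj_on_def using len by (simp add: f_X nth_eq_iff_index_eq)
  qed
  ultimately have "bij_betw f X (shift_down X)"
    using set_representation[OF X, of f] rep by (simp add: bij_betw_def)
  moreover have "\<forall>x\<in>X. f x \<noteq> x"
    using X_eq f_X no_fixed by auto
  ultimately show ?thesis
    unfolding represents_skew_derangement_def signed_skew_derangement_def
    using X rep by metis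
qed

lemma represents_skew_derangement_iff:
  "signed_perm {0..<n} \<pi> \<Longrightarrow>
     represents_skew_derangement n \<pi> \<longleftrightarrow> (\<forall>k<n. \<pi> ! k \<noteq> (Suc k, bar_of \<pi> k))"
  using represents_skew_derangement_nth_neq represents_skew_derangementI by blast

lemma bij_betw_Collect_comp:
  assumes "bij_betw f A B"
  shows "bij_betw f {x \<in> A. P (f x)} {y \<in> B. P y}"
proof (rule bij_betw_subset[OF assms])
  show "f ` {x \<in> A. P (f x)} = {y \<in> B. P y}"
    using bij_betw_imp_surj_on[OF assms] by blast
qed blast

lemma typeB_derangement_to_typeB_iff:
  assumes "1 \<le> n" "signed_perm {0..<n} \<pi>"
  shows "typeB_derangement n (to_typeB n \<pi>) \<longleftrightarrow>
           \<pi> ! (n - 1) \<noteq> (0, False) \<and> (\<forall>k<n. \<pi> ! k \<noteq> (Suc k, bar_of \<pi> k))"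
proof -
  have "signed_perm {1..n} (to_typeB n \<pi>)"
    using bij_betw_to_typeB[OF assms(1)] assms(2) by (auto simp: bij_betw_def)
  moreover have "n - 1 < n" "Suc (n - 1) = n"
    using assms(1) by simp_all
  ultimately show ?thesis
    unfolding typeB_derangement_def Suc_eq_plus1[symmetric]
    using to_typeB_nth_eq_fixed_iff[OF assms(2)] by (metis Suc_inject)
qed

theorem lemma3:
  fixes n :: nat
  assumes "n \<ge> 1"
  shows "\<exists>g. bij_betw g
           {\<pi>. signed_perm {0..<n} \<pi> \<and> \<pi> ! (n - 1) \<noteq> (0, False)
                \<and> represents_skew_derangement n \<pi>}
           {\<tau>. typeB_derangement n \<tau>}"
proof
  have "{\<pi>. signed_perm {0..<n} \<pi> \<and> \<pi> ! (n - 1) \<noteq> (0, False) \<and> represents_skew_derangement n \<pi>}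
      = {\<pi> \<in> {\<pi>. signed_perm {0..<n} \<pi>}. typeB_derangement n (to_typeB n \<pi>)}"
    using typeB_derangement_to_typeB_iff[OF assms] represents_skew_derangement_iff by auto
  moreover have "{\<tau>. typeB_derangement n \<tau>} = {\<tau> \<in> {\<tau>. signed_perm {1..n} \<tau>}. typeB_derangement n \<tau>}"
    by (auto simp: typeB_derangement_def)
  ultimately show "bij_betw (to_typeB n)
      {\<pi>. signed_perm {0..<n} \<pi> \<and> \<pi> ! (n - 1) \<noteq> (0, False) \<and> represents_skew_derangement n \<pi>}
      {\<tau>. typeB_derangement n \<tau>}"
    using bij_betw_Collect_comp[OF bij_betw_to_typeB[OF assms]] by simp
qed

end
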